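(* Let $n\ge1$, $k\ge 1$, and let $s_1,\dots,s_k$ be positive integers. There are $k$ players who independently each open one cereal box per time step; each box contains one of $n$ coupon types chosen uniformly at random, independently of everything else. Player $i$ is currently missing $s_i$ of the $n$ coupon types, and $X_i(s_i)$ is the number of boxes player $i$ must open until they have all $n$ types. Let $Q_1(s_1,\dots,s_k)$ be the probability that the first player is the fastest to complete the collection, i.e. that $X_1(s_1)=\min\{X_1(s_1),\dots,X_k(s_k)\}$. Then $$Q_1(s_1,\dots,s_k)=1-\sum_{1<i}\frac{s_1}{s_1+s_i}+\sum_{1<i<j}\frac{s_1}{s_1+s_i+s_j}-\sum_{1<i<j<l}\frac{s_1}{s_1+s_i+s_j+s_l}+\cdots+(-1)^{k-1}\frac{s_1}{s_1+\cdots+s_k}+o(1),$$ where the indices $i,j,l,\dots$ range over $\{2,\dots,k\}$.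
   Context: The term $o(1)$ denotes a quantity tending to $0$ as $n\to\infty$ with $k$ and $s_1,\dots,s_k$ fixed. *)

theory Defs
  imports "HOL-Probability.Probability" "HOL-Library.Extended_Nat"
begin

definition coupon_space :: "nat \<Rightarrow> nat \<Rightarrow> (nat \<Rightarrow> nat stream) measure" where
  "coupon_space n k =
     PiM {1..k} (\<lambda>_. stream_space (measure_pmf (pmf_of_set {1..n})))"

definition completion_time :: "nat set \<Rightarrow> nat stream \<Rightarrow> enat" where
  "completion_time M w =
     (if \<exists>t. M \<subseteq> set (stake t w) then enat (LEAST t. M \<subseteq> set (stake t w)) else \<infinity>)"

text \<open>Q_1: probability that player 1 is (one of) the fastest, i.e. X_1 = min X_i.
  M i is the set of types missing for player i.\<close>
definition Q1 :: "nat \<Rightarrow> nat \<Rightarrow> (nat \<Rightarrow> nat set) \<Rightarrow> real" where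
  "Q1 n k M = measure (coupon_space n k)
     {\<omega> \<in> space (coupon_space n k).
        \<forall>i\<in>{1..k}. completion_time (M 1) (\<omega> 1) \<le> completion_time (M i) (\<omega> i)}"

end

theory Submission
  imports Defs
begin

(* Write F_M(t) for the probability that a collector missing the types M is complete after t boxes.
  Splitting according to the time t + 1 at which player 1 completes, independence of the players gives
  (ties count for player 1)
    Q_1 = sum_t (F_{M_1}(t+1) - F_{M_1}(t)) * prod_{i >= 2} (1 - F_{M_i}(t)).
  By inclusion-exclusion F_M(t) = sum_{B <= M} (-1)^|B| (1 - |B|/n)^t, which is within O(1/n),
  uniformly in t, of u(t)^|M| with u(t) = 1 - (1 - 1/n)^t: asymptotically the missing types are
  found independently of each other. After this replacement the sum is a Riemann-Stieltjes sum on
  the grid 0 = u(0) <= u(1) <= ... <= 1 of mesh 1/n. Expanding the product over i >= 2, the term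
  of a set S of players approximates the integral of u^(s_S) d(u^(s_1)) over [0, 1], which is
  s_1 / (s_1 + s_S) with s_S the sum of the s_i over S; all errors are O(1/n). *)

lemma power_diff_le_mult_power:
  fixes a b :: real
  assumes "0 \<le> a" "a \<le> b"
  shows "b ^ t - a ^ t \<le> real t * (b - a) * b ^ (t - 1)"
proof -
  have "(\<Sum>i<t. a ^ (t - Suc i) * b ^ i) \<le> (\<Sum>i<t. b ^ (t - 1))"
  proof (rule sum_mono)
    fix i assume i: "i \<in> {..<t}"
    have "a ^ (t - Suc i) * b ^ i \<le> b ^ (t - Suc i) * b ^ i"
      using assms by (intro mult_right_mono power_mono) auto
    also have "\<dots> = b ^ (t - 1)" using i by (simp add: power_add[symmetric])
    finally show "a ^ (t - Suc i) * b ^ i \<le> b ^ (t - 1)" .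
  qed
  then have "(b - a) * (\<Sum>i<t. a ^ (t - Suc i) * b ^ i) \<le> (b - a) * (\<Sum>i<t. b ^ (t - 1))"
    using assms by (intro mult_left_mono) auto
  then show ?thesis by (simp add: power_diff_sumr2 algebra_simps)
qed

lemma power_diff_le_mult:
  fixes x y :: real
  assumes "0 \<le> y" "y \<le> x" "x \<le> 1"
  shows "x ^ a - y ^ a \<le> real a * (x - y)"
proof -
  have "x ^ a - y ^ a \<le> real a * (x - y) * x ^ (a - 1)"
    using assms by (intro power_diff_le_mult_power)
  also have "\<dots> \<le> real a * (x - y) * 1"
    using assms by (intro mult_left_mono power_le_one) auto
  finally show ?thesis by simp
qed

lemma one_minus_power_le_second_order:
  fixes x :: real
  assumes "0 \<le> x" "x \<le> 1"
  shows "(1 - x) ^ j \<le> 1 - real j * x + (real j)^2 * x^2"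
proof (induction j)
  case 0
  then show ?case by simp
next
  case (Suc j)
  have "(1 - x) ^ Suc j \<le> (1 - x) * (1 - real j * x + (real j)^2 * x^2)"
    using Suc assms by (simp add: mult_left_mono)
  also have "\<dots> = 1 - real (Suc j) * x + (real j + (real j)^2) * x^2 - (real j)^2 * x^3"
    by (simp add: algebra_simps power2_eq_square power3_eq_cube)
  also have "\<dots> \<le> 1 - real (Suc j) * x + (real (Suc j))^2 * x^2"
  proof -
    have "(real j + (real j)^2) * x^2 \<le> (real (Suc j))^2 * x^2"
      by (intro mult_right_mono) (auto simp: power2_eq_square algebra_simps)
    moreover have "0 \<le> (real j)^2 * x^3" using assms by simp
    ultimately show ?thesis by linarith
  qed
  finally show ?case .
qed

lemma Suc_mult_power_one_minus_inverse_le: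
  assumes n: "n \<ge> 1"
  shows "real (Suc m) * (1 - 1 / real n) ^ m \<le> real n"
proof -
  define x where "x = 1 / real n"
  have x: "0 \<le> x" "x \<le> 1" using n by (auto simp: x_def)
  have "(1 - x) ^ m * (1 + real m * x) \<le> (1 - x) ^ m * (1 + x) ^ m"
    using x by (intro mult_left_mono Bernoulli_inequality) auto
  also have "\<dots> = (1 - x^2) ^ m"
    by (simp add: power_mult_distrib[symmetric] algebra_simps power2_eq_square)
  also have "\<dots> \<le> 1" using x by (intro power_le_one) (auto simp: power_le_one)
  finally have bernoulli: "(1 - x) ^ m * (1 + real m * x) \<le> 1" .
  have "real (Suc m) \<le> real n * (1 + real m * x)" using n by (simp add: x_def field_simps)
  then have "real (Suc m) * (1 - x) ^ m \<le> real n * (1 + real m * x) * (1 - x) ^ m"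
    using x by (intro mult_right_mono) auto
  also have "\<dots> = real n * ((1 - x) ^ m * (1 + real m * x))"
    by simp
  also have "\<dots> \<le> real n" using bernoulli by (simp add: mult_left_le)
  finally show ?thesis by (simp add: x_def)
qed

lemma power_one_minus_mult_approx:
  assumes n: "n \<ge> 1" and j: "j \<le> n"
  shows "\<bar>(1 - real j / real n) ^ t - ((1 - 1 / real n) ^ j) ^ t\<bar> \<le> (real j)^2 / real n"
proof (cases "j = 0 \<or> t = 0")
  case True
  then show ?thesis by auto
next
  case False
  then obtain m where t: "t = Suc m" and j1: "j \<ge> 1" by (cases t) auto
  define q where "q = 1 - 1 / real n"
  define a where "a = 1 - real j / real n"
  define b where "b = q ^ j"
  have q: "0 \<le> q" "q \<le> 1" using n by (auto simp: q_def)
  have a0: "0 \<le> a" using j n by (auto simp: a_def field_simps)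
  have ab: "a \<le> b"
    using Bernoulli_inequality[of "- 1 / real n" j] n by (simp add: a_def b_def q_def)
  have bq: "b \<le> q" unfolding b_def using j1 q by (metis power_decreasing power_one_right)
  have "b \<le> 1 - real j * (1 / real n) + (real j)^2 * (1 / real n)^2"
    unfolding b_def q_def by (rule one_minus_power_le_second_order) (use n in auto)
  then have ba: "b - a \<le> (real j)^2 / (real n)^2"
    by (simp add: a_def power_divide)
  have "b ^ t - a ^ t \<le> real t * (b - a) * b ^ m"
    using power_diff_le_mult_power[OF a0 ab, of t] t by simp
  also have "\<dots> \<le> real t * ((real j)^2 / (real n)^2) * q ^ m"
    using ba a0 ab bq by (intro mult_mono power_mono) auto
  also have "\<dots> = (real (Suc m) * q ^ m) * ((real j)^2 / (real n)^2)" using t by simp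
  also have "\<dots> \<le> real n * ((real j)^2 / (real n)^2)"
    using Suc_mult_power_one_minus_inverse_le[OF n, of m] by (intro mult_right_mono) (auto simp: q_def)
  also have "\<dots> = (real j)^2 / real n" using n by (simp add: power2_eq_square)
  finally have "b ^ t - a ^ t \<le> (real j)^2 / real n" .
  moreover have "a ^ t \<le> b ^ t" using a0 ab by (intro power_mono)
  ultimately show ?thesis by (simp add: a_def b_def q_def power_mult)
qed

lemma power_add_diff_bounds:
  fixes x y :: real
  assumes y: "0 \<le> y" "y \<le> x"
  shows "real (a + b) * y ^ a * (x ^ b - y ^ b) \<le> real b * (x ^ (a + b) - y ^ (a + b))"
    and "real b * (x ^ (a + b) - y ^ (a + b)) \<le> real (a + b) * x ^ a * (x ^ b - y ^ b)"
proof -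
  have deriv_split: "z ^ (a + b - 1) = z ^ a * z ^ (b - 1)" if "b \<noteq> 0" for z :: real
    using that by (simp add: power_add[symmetric])
  define f where "f w = real b * (w ^ (a + b) - y ^ (a + b)) - real (a + b) * y ^ a * (w ^ b - y ^ b)" for w
  have "f y \<le> f x"
  proof (rule DERIV_nonneg_imp_nondecreasing[OF y(2)])
    fix z assume z: "y \<le> z" "z \<le> x"
    have "0 \<le> real b * real (a + b) * (z ^ (a + b - 1) - y ^ a * z ^ (b - 1))"
      using z y deriv_split by (cases "b = 0") (auto intro!: mult_nonneg_nonneg mult_right_mono power_mono)
    moreover have "(f has_real_derivative real b * real (a + b) * (z ^ (a + b - 1) - y ^ a * z ^ (b - 1))) (at z)"
      unfolding f_def by (auto intro!: derivative_eq_intros simp: algebra_simps)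
    ultimately show "\<exists>d. (f has_real_derivative d) (at z) \<and> 0 \<le> d" by blast
  qed
  then show "real (a + b) * y ^ a * (x ^ b - y ^ b) \<le> real b * (x ^ (a + b) - y ^ (a + b))"
    by (simp add: f_def)
  define g where "g w = real (a + b) * x ^ a * (x ^ b - w ^ b) - real b * (x ^ (a + b) - w ^ (a + b))" for w
  have "g x \<le> g y"
  proof (rule DERIV_nonpos_imp_nonincreasing[OF y(2)])
    fix z assume z: "y \<le> z" "z \<le> x"
    have "0 \<le> real b * real (a + b) * (x ^ a * z ^ (b - 1) - z ^ (a + b - 1))"
      using z y deriv_split by (cases "b = 0") (auto intro!: mult_nonneg_nonneg mult_right_mono power_mono)
    moreover have "(g has_real_derivative - (real b * real (a + b) * (x ^ a * z ^ (b - 1) - z ^ (a + b - 1)))) (at z)"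
      unfolding g_def by (auto intro!: derivative_eq_intros simp: algebra_simps)
    ultimately show "\<exists>d. (g has_real_derivative d) (at z) \<and> d \<le> 0" by (intro exI conjI) auto
  qed
  then show "real b * (x ^ (a + b) - y ^ (a + b)) \<le> real (a + b) * x ^ a * (x ^ b - y ^ b)"
    by (simp add: g_def)
qed

lemma prod_one_minus_power_expand:
  fixes x :: "'a::comm_ring_1"
  assumes "finite I"
  shows "(\<Prod>i\<in>I. 1 - x ^ s i) = (\<Sum>S\<in>Pow I. (-1) ^ card S * x ^ (\<Sum>i\<in>S. s i))"
proof -
  have "(\<Prod>i\<in>I. 1 - x ^ s i) = (\<Sum>S\<in>Pow I. (\<Prod>i\<in>S. - (x ^ s i)) * (\<Prod>i\<in>I - S. 1))"
    using prod_add[OF assms, of "\<lambda>i. - (x ^ s i)" "\<lambda>_. 1"] by simp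
  then show ?thesis by (simp add: prod_uminus power_sum)
qed

lemma sum_lessThan_by_parts:
  fixes F w :: "nat \<Rightarrow> 'a::comm_ring"
  shows "(\<Sum>t<N. (F (Suc t) - F t) * w t) = F N * w N - F 0 * w 0 - (\<Sum>t<N. F (Suc t) * (w (Suc t) - w t))"
  by (induction N) (auto simp: algebra_simps)

section \<open>Riemann-Stieltjes sums over a grid in [0, 1]\<close>

locale unit_grid =
  fixes v :: "nat \<Rightarrow> real" and \<delta> :: real
  assumes grid_0: "v 0 = 0"
    and grid_mono: "v t \<le> v (Suc t)"
    and grid_le_1: "v t \<le> 1"
    and grid_step: "v (Suc t) - v t \<le> \<delta>"
begin

lemma grid_nonneg: "0 \<le> v t"
  using grid_0 incseq_SucI[of v, OF grid_mono] by (metis incseq_def zero_le)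

lemma grid_mesh_nonneg: "0 \<le> \<delta>"
  using grid_step[of 0] grid_mono[of 0] by linarith

lemma grid_power_mono: "v t ^ b \<le> v (Suc t) ^ b"
  using grid_nonneg grid_mono by (intro power_mono)

lemma grid_power_bounds: "0 \<le> v t ^ b" "v t ^ b \<le> 1"
  using grid_nonneg grid_le_1 by (auto intro: power_le_one)

(* Lower and upper Riemann sums of the integral of u^a d(u^b) over [0, v N], which is
   b / (a + b) * v N ^ (a + b). *)
lemma riemann_sum_power_lower:
  assumes "0 < a + b"
  shows "real b / real (a + b) * v N ^ (a + b) \<le> (\<Sum>t<N. v (Suc t) ^ a * (v (Suc t) ^ b - v t ^ b))"
proof (induction N)
  case 0
  then show ?case using grid_0 assms by (simp add: power_0_left)
next
  case (Suc N)
  have "real b * (v (Suc N) ^ (a + b) - v N ^ (a + b)) \<le> real (a + b) * v (Suc N) ^ a * (v (Suc N) ^ b - v N ^ b)"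
    using grid_nonneg grid_mono by (intro power_add_diff_bounds(2))
  moreover have "0 < real a + real b" using assms by linarith
  ultimately have "real b / real (a + b) * (v (Suc N) ^ (a + b) - v N ^ (a + b)) \<le> v (Suc N) ^ a * (v (Suc N) ^ b - v N ^ b)"
    by (simp add: field_simps)
  then show ?case using Suc by (simp add: algebra_simps)
qed

lemma riemann_sum_power_upper:
  assumes "0 < a + b"
  shows "(\<Sum>t<N. v (Suc t) ^ a * (v (Suc t) ^ b - v t ^ b)) \<le> real b / real (a + b) * v N ^ (a + b) + real a * \<delta>"
proof -
  have pos: "0 < real a + real b" using assms by linarith
  have "(\<Sum>t<N. v (Suc t) ^ a * (v (Suc t) ^ b - v t ^ b)) \<le> real b / real (a + b) * v N ^ (a + b) + real a * \<delta> * v N ^ b"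
  proof (induction N)
    case 0
    then show ?case using grid_0 grid_mesh_nonneg by (cases b) auto
  next
    case (Suc N)
    let ?x = "v (Suc N)" and ?y = "v N"
    have "real (a + b) * ?y ^ a * (?x ^ b - ?y ^ b) \<le> real b * (?x ^ (a + b) - ?y ^ (a + b))"
      using grid_nonneg grid_mono by (intro power_add_diff_bounds(1))
    then have lower: "?y ^ a * (?x ^ b - ?y ^ b) \<le> real b / real (a + b) * (?x ^ (a + b) - ?y ^ (a + b))"
      using pos by (simp add: field_simps)
    have "?x ^ a - ?y ^ a \<le> real a * (?x - ?y)"
      using grid_nonneg grid_mono grid_le_1 by (intro power_diff_le_mult)
    also have "\<dots> \<le> real a * \<delta>" using grid_step by (intro mult_left_mono) auto
    finally have step: "?x ^ a - ?y ^ a \<le> real a * \<delta>" .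
    have "?x ^ a * (?x ^ b - ?y ^ b) = ?y ^ a * (?x ^ b - ?y ^ b) + (?x ^ a - ?y ^ a) * (?x ^ b - ?y ^ b)"
      by (simp add: algebra_simps)
    also have "\<dots> \<le> real b / real (a + b) * (?x ^ (a + b) - ?y ^ (a + b)) + real a * \<delta> * (?x ^ b - ?y ^ b)"
      using lower step grid_power_mono by (intro add_mono mult_right_mono) auto
    finally show ?case using Suc by (simp add: algebra_simps)
  qed
  also have "\<dots> \<le> real b / real (a + b) * v N ^ (a + b) + real a * \<delta>"
    using grid_power_bounds grid_mesh_nonneg by (simp add: mult_left_le)
  finally show ?thesis .
qed

lemma stieltjes_sum_by_parts_approx:
  fixes F :: "nat \<Rightarrow> real"
  assumes F0: "F 0 = 0" and approx: "\<And>t. \<bar>F t - v t ^ a\<bar> \<le> \<epsilon>"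
  shows "\<bar>(\<Sum>t<N. (F (Suc t) - F t) * v t ^ b)
           - (v N ^ (a + b) - (\<Sum>t<N. v (Suc t) ^ a * (v (Suc t) ^ b - v t ^ b)))\<bar> \<le> 2 * \<epsilon>"
proof -
  let ?w = "\<lambda>t. v t ^ b"
  have \<epsilon>: "0 \<le> \<epsilon>" using approx[of 0] by linarith
  have by_parts: "(\<Sum>t<N. (F (Suc t) - F t) * ?w t) = F N * ?w N - (\<Sum>t<N. F (Suc t) * (?w (Suc t) - ?w t))"
    using sum_lessThan_by_parts[of F ?w N] F0 by simp
  have "\<bar>(\<Sum>t<N. F (Suc t) * (?w (Suc t) - ?w t)) - (\<Sum>t<N. v (Suc t) ^ a * (?w (Suc t) - ?w t))\<bar>
      = \<bar>\<Sum>t<N. (F (Suc t) - v (Suc t) ^ a) * (?w (Suc t) - ?w t)\<bar>"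
    by (simp add: sum_subtractf[symmetric] algebra_simps)
  also have "\<dots> \<le> (\<Sum>t<N. \<epsilon> * (?w (Suc t) - ?w t))"
    by (rule order_trans[OF sum_abs sum_mono])
       (use approx grid_power_mono in \<open>auto simp: abs_mult intro: mult_right_mono\<close>)
  also have "\<dots> = \<epsilon> * (?w N - ?w 0)"
    by (simp add: sum_distrib_left[symmetric] sum_lessThan_telescope[of ?w])
  also have "\<dots> \<le> \<epsilon>"
    using \<epsilon> grid_power_bounds[of N b] grid_power_bounds[of 0 b] by (simp add: mult_left_le)
  finally have inner:
    "\<bar>(\<Sum>t<N. F (Suc t) * (?w (Suc t) - ?w t)) - (\<Sum>t<N. v (Suc t) ^ a * (?w (Suc t) - ?w t))\<bar> \<le> \<epsilon>" .
  have "\<bar>F N * ?w N - v N ^ (a + b)\<bar> = \<bar>F N - v N ^ a\<bar> * ?w N"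
    using grid_power_bounds[of N b] by (simp add: power_add abs_mult left_diff_distrib[symmetric])
  also have "\<dots> \<le> \<bar>F N - v N ^ a\<bar> * 1"
    using grid_power_bounds[of N b] by (intro mult_left_mono) auto
  also have "\<dots> \<le> \<epsilon>"
    using approx[of N] by simp
  finally have boundary: "\<bar>F N * ?w N - v N ^ (a + b)\<bar> \<le> \<epsilon>" .
  show ?thesis
    using inner boundary unfolding by_parts abs_le_iff by linarith
qed

(* The sum is a Riemann-Stieltjes sum for the integral of u^b d(u^a) over [0, 1], which is a / (a + b). *)
lemma stieltjes_sum_power_approx:
  fixes F :: "nat \<Rightarrow> real"
  assumes ab: "0 < a + b" and F0: "F 0 = 0" and approx: "\<And>t. \<bar>F t - v t ^ a\<bar> \<le> \<epsilon>"
  shows "\<bar>(\<Sum>t<N. (F (Suc t) - F t) * v t ^ b) - real a / real (a + b)\<bar>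
           \<le> 2 * \<epsilon> + real a * \<delta> + (1 - v N ^ (a + b))"
proof -
  have pos: "0 < real a + real b" using ab by linarith
  have frac: "0 \<le> real a / real (a + b)" "real a / real (a + b) \<le> 1"
    using pos by auto
  have tail: "0 \<le> 1 - v N ^ (a + b)"
    using grid_power_bounds[of N "a + b"] by simp
  have "v N ^ (a + b) - real b / real (a + b) * v N ^ (a + b) = real a / real (a + b) * v N ^ (a + b)"
    using pos by (simp add: field_simps)
  moreover have "real a / real (a + b) * (1 - v N ^ (a + b)) \<le> 1 - v N ^ (a + b)"
    by (rule mult_left_le_one_le[OF tail frac])
  moreover have "0 \<le> real a / real (a + b) * (1 - v N ^ (a + b))"
    using frac tail by simp
  moreover have "0 \<le> real a * \<delta>"
    using grid_mesh_nonneg by simp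
  ultimately show ?thesis
    using stieltjes_sum_by_parts_approx[OF F0 approx, of b N]
      riemann_sum_power_lower[OF ab, of N] riemann_sum_power_upper[OF ab, of N]
    unfolding abs_le_iff right_diff_distrib mult_1_right
    by linarith
qed

lemma stieltjes_sum_prod_replace:
  fixes F :: "nat \<Rightarrow> real" and G :: "'i \<Rightarrow> nat \<Rightarrow> real" and s :: "'i \<Rightarrow> nat"
  assumes F0: "F 0 = 0" and F_mono: "\<And>t. F t \<le> F (Suc t)" and F_le_1: "\<And>t. F t \<le> 1"
    and \<epsilon>: "0 \<le> \<epsilon>"
    and G_bounds: "\<And>i t. i \<in> I \<Longrightarrow> 0 \<le> G i t \<and> G i t \<le> 1"
    and G_approx: "\<And>i t. i \<in> I \<Longrightarrow> \<bar>G i t - v t ^ s i\<bar> \<le> \<epsilon>"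
  shows "\<bar>(\<Sum>t<N. (F (Suc t) - F t) * (\<Prod>i\<in>I. 1 - G i t))
           - (\<Sum>t<N. (F (Suc t) - F t) * (\<Prod>i\<in>I. 1 - v t ^ s i))\<bar> \<le> real (card I) * \<epsilon>"
proof -
  let ?dF = "\<lambda>t. F (Suc t) - F t"
  have "\<bar>(\<Sum>t<N. ?dF t * (\<Prod>i\<in>I. 1 - G i t)) - (\<Sum>t<N. ?dF t * (\<Prod>i\<in>I. 1 - v t ^ s i))\<bar>
      \<le> (\<Sum>t<N. ?dF t * \<bar>(\<Prod>i\<in>I. 1 - G i t) - (\<Prod>i\<in>I. 1 - v t ^ s i)\<bar>)"
    unfolding sum_subtractf[symmetric] right_diff_distrib[symmetric]
    by (rule order_trans[OF sum_abs]) (simp add: abs_mult F_mono)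
  also have "\<dots> \<le> (\<Sum>t<N. ?dF t * (real (card I) * \<epsilon>))"
  proof (intro sum_mono mult_left_mono)
    fix t
    show "0 \<le> ?dF t" using F_mono[of t] by simp
    have "\<bar>(\<Prod>i\<in>I. 1 - G i t) - (\<Prod>i\<in>I. 1 - v t ^ s i)\<bar> \<le> (\<Sum>i\<in>I. \<bar>(1 - G i t) - (1 - v t ^ s i)\<bar>)"
      using norm_prod_diff[of I "\<lambda>i. 1 - G i t" "\<lambda>i. 1 - v t ^ s i"] G_bounds grid_power_bounds
      by fastforce
    also have "\<dots> \<le> real (card I) * \<epsilon>"
      using sum_bounded_above[of I "\<lambda>i. \<bar>(1 - G i t) - (1 - v t ^ s i)\<bar>" \<epsilon>] G_approx
      by (simp add: abs_minus_commute)
    finally show "\<bar>(\<Prod>i\<in>I. 1 - G i t) - (\<Prod>i\<in>I. 1 - v t ^ s i)\<bar> \<le> real (card I) * \<epsilon>" .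
  qed
  also have "\<dots> = F N * (real (card I) * \<epsilon>)"
    using F0 by (simp add: sum_distrib_right[symmetric] sum_lessThan_telescope[of F])
  also have "\<dots> \<le> real (card I) * \<epsilon>"
  proof (rule mult_left_le_one_le)
    show "0 \<le> F N"
      using F0 incseq_SucI[of F, OF F_mono] by (metis incseq_def zero_le)
  qed (use F_le_1 \<epsilon> in auto)
  finally show ?thesis .
qed

lemma stieltjes_sum_prod_approx:
  fixes F :: "nat \<Rightarrow> real" and G :: "'i \<Rightarrow> nat \<Rightarrow> real" and s :: "'i \<Rightarrow> nat"
  assumes I: "finite I" and a: "a \<ge> 1"
    and F0: "F 0 = 0" and F_mono: "\<And>t. F t \<le> F (Suc t)" and F_le_1: "\<And>t. F t \<le> 1"
    and F_approx: "\<And>t. \<bar>F t - v t ^ a\<bar> \<le> \<epsilon>"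
    and G_bounds: "\<And>i t. i \<in> I \<Longrightarrow> 0 \<le> G i t \<and> G i t \<le> 1"
    and G_approx: "\<And>i t. i \<in> I \<Longrightarrow> \<bar>G i t - v t ^ s i\<bar> \<le> \<epsilon>"
  shows "\<bar>(\<Sum>t<N. (F (Suc t) - F t) * (\<Prod>i\<in>I. 1 - G i t))
          - (\<Sum>S\<in>Pow I. (-1) ^ card S * real a / real (a + (\<Sum>i\<in>S. s i)))\<bar>
       \<le> real (card I) * \<epsilon> + 2 ^ card I * (2 * \<epsilon> + real a * \<delta> + (1 - v N ^ (a + (\<Sum>i\<in>I. s i))))"
proof -
  let ?X = "\<lambda>S. \<Sum>t<N. (F (Suc t) - F t) * v t ^ (\<Sum>i\<in>S. s i)"
  let ?L = "\<lambda>S. real a / real (a + (\<Sum>i\<in>S. s i))"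
  let ?err = "2 * \<epsilon> + real a * \<delta> + (1 - v N ^ (a + (\<Sum>i\<in>I. s i)))"
  have \<epsilon>: "0 \<le> \<epsilon>" using F_approx[of 0] by linarith
  have "(\<Sum>t<N. (F (Suc t) - F t) * (\<Prod>i\<in>I. 1 - v t ^ s i)) = (\<Sum>S\<in>Pow I. (-1) ^ card S * ?X S)"
    unfolding prod_one_minus_power_expand[OF I]
    by (simp add: sum_distrib_left sum_distrib_right algebra_simps sum.swap[of _ "Pow I"])
  moreover have "\<bar>(\<Sum>S\<in>Pow I. (-1) ^ card S * ?X S) - (\<Sum>S\<in>Pow I. (-1) ^ card S * ?L S)\<bar> \<le> 2 ^ card I * ?err"
  proof -
    have "\<bar>?X S - ?L S\<bar> \<le> ?err" if "S \<in> Pow I" for S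
    proof -
      have "v N ^ (a + (\<Sum>i\<in>I. s i)) \<le> v N ^ (a + (\<Sum>i\<in>S. s i))"
        using that I grid_nonneg grid_le_1 by (intro power_decreasing add_left_mono sum_mono2) auto
      then show ?thesis
        using stieltjes_sum_power_approx[of a "\<Sum>i\<in>S. s i" F \<epsilon> N] a F0 F_approx by simp
    qed
    then have "\<bar>\<Sum>S\<in>Pow I. (-1) ^ card S * (?X S - ?L S)\<bar> \<le> (\<Sum>S\<in>Pow I. ?err)"
      by (intro order_trans[OF sum_abs sum_mono]) (simp add: abs_mult)
    then show ?thesis
      using I by (simp add: sum_subtractf[symmetric] right_diff_distrib card_Pow)
  qed
  moreover have "\<bar>(\<Sum>t<N. (F (Suc t) - F t) * (\<Prod>i\<in>I. 1 - G i t))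
      - (\<Sum>t<N. (F (Suc t) - F t) * (\<Prod>i\<in>I. 1 - v t ^ s i))\<bar> \<le> real (card I) * \<epsilon>"
    using F0 F_mono F_le_1 \<epsilon> G_bounds G_approx by (rule stieltjes_sum_prod_replace)
  ultimately show ?thesis
    by (simp add: mult.assoc)
qed

end

section \<open>A single collector\<close>

definition coupon_stream :: "nat \<Rightarrow> nat stream measure" where
  "coupon_stream n = stream_space (measure_pmf (pmf_of_set {1..n}))"

lemma prob_space_coupon_stream: "prob_space (coupon_stream n)"
  unfolding coupon_stream_def
  by (rule prob_space.prob_space_stream_space) (rule prob_space_measure_pmf)

lemma space_coupon_stream [simp]: "space (coupon_stream n) = UNIV"
  by (simp add: coupon_stream_def space_stream_space)

lemma sets_coupon_stream_avoid: "{w. \<forall>i<t. w !! i \<notin> J} \<in> sets (coupon_stream n)"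
proof -
  have "{w \<in> space (coupon_stream n). \<forall>i<t. w !! i \<notin> J} \<in> sets (coupon_stream n)"
    unfolding coupon_stream_def by measurable
  then show ?thesis by simp
qed

lemma measure_coupon_stream_avoid:
  assumes n: "n \<ge> 1" and J: "J \<subseteq> {1..n}"
  shows "measure (coupon_stream n) {w. \<forall>i<t. w !! i \<notin> J} = (1 - real (card J) / real n) ^ t"
proof -
  let ?box = "measure_pmf (pmf_of_set {1..n})"
  let ?avoid = "\<lambda>t. {w. \<forall>i<t. w !! i \<notin> J}"
  interpret S: prob_space "coupon_stream n" by (rule prob_space_coupon_stream)
  have p_nonneg: "0 \<le> 1 - real (card J) / real n"
    using card_mono[OF _ J] n by (simp add: field_simps)
  have box_avoid: "measure ?box (- J) = 1 - real (card J) / real n"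
  proof -
    have "measure ?box (- J) = real (card ({1..n} - J)) / real n"
      using n by (subst measure_pmf_of_set) (auto simp: Diff_eq Int_commute)
    also have "real (card ({1..n} - J)) = real n - real (card J)"
      using J card_mono[OF _ J] by (subst card_Diff_subset) (auto intro: finite_subset)
    finally show ?thesis using n by (simp add: field_simps)
  qed
  have "emeasure (coupon_stream n) (?avoid t) = ennreal ((1 - real (card J) / real n) ^ t)"
  proof (induction t)
    case 0
    then show ?case using S.emeasure_space_1 by simp
  next
    case (Suc t)
    have "emeasure (coupon_stream n) (?avoid (Suc t)) =
        (\<integral>\<^sup>+x. emeasure (coupon_stream n) {w \<in> space (coupon_stream n). x ## w \<in> ?avoid (Suc t)} \<partial>?box)"
      unfolding coupon_stream_def
      by (rule prob_space.emeasure_stream_space[OF prob_space_measure_pmf])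
         (rule sets_coupon_stream_avoid[unfolded coupon_stream_def])
    also have "\<dots> = (\<integral>\<^sup>+x. indicator (- J) x * emeasure (coupon_stream n) (?avoid t) \<partial>?box)"
      by (intro nn_integral_cong) (auto simp: All_less_Suc2 indicator_def)
    also have "\<dots> = emeasure ?box (- J) * emeasure (coupon_stream n) (?avoid t)"
      by (subst nn_integral_multc) auto
    also have "\<dots> = ennreal ((1 - real (card J) / real n) ^ Suc t)"
      using Suc box_avoid p_nonneg
      by (simp add: measure_pmf.emeasure_eq_measure ennreal_mult[symmetric])
    finally show ?case .
  qed
  then show ?thesis
    using p_nonneg by (simp add: S.emeasure_eq_measure)
qed

lemma in_set_stake_iff: "c \<in> set (stake t w) \<longleftrightarrow> (\<exists>i<t. w !! i = c)"
  by (auto simp: in_set_conv_nth)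

lemma set_stake_mono: "l \<le> t \<Longrightarrow> set (stake l w) \<subseteq> set (stake t w)"
  by (metis le_add_diff_inverse set_append stake_add sup_ge1)

lemma completion_time_le_iff: "completion_time M w \<le> enat t \<longleftrightarrow> M \<subseteq> set (stake t w)"
proof
  assume seen: "M \<subseteq> set (stake t w)"
  then have "completion_time M w = enat (LEAST t. M \<subseteq> set (stake t w))"
    unfolding completion_time_def by (intro if_P) blast
  moreover have "(LEAST t. M \<subseteq> set (stake t w)) \<le> t"
    using seen by (rule Least_le)
  ultimately show "completion_time M w \<le> enat t" by simp
next
  assume le: "completion_time M w \<le> enat t"
  have ex: "\<exists>t. M \<subseteq> set (stake t w)"
  proof (rule ccontr)
    assume "\<nexists>t. M \<subseteq> set (stake t w)"
    then have "completion_time M w = \<infinity>" unfolding completion_time_def by (rule if_not_P)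
    with le show False by simp
  qed
  define l where "l = (LEAST t. M \<subseteq> set (stake t w))"
  have "completion_time M w = enat l"
    unfolding completion_time_def l_def using ex by (rule if_P)
  with le have "set (stake l w) \<subseteq> set (stake t w)"
    by (intro set_stake_mono) simp
  moreover have "M \<subseteq> set (stake l w)" unfolding l_def using ex by (rule LeastI_ex)
  ultimately show "M \<subseteq> set (stake t w)" by blast
qed

lemma sets_coupon_stream_seen:
  assumes "finite M"
  shows "{w. M \<subseteq> set (stake t w)} \<in> sets (coupon_stream n)"
proof -
  have "{w. M \<subseteq> set (stake t w)} = space (coupon_stream n) - (\<Union>c\<in>M. {w. \<forall>i<t. w !! i \<notin> {c}})"
    by (auto simp: subset_iff in_set_stake_iff)
  also have "\<dots> \<in> sets (coupon_stream n)"
    using assms by (intro sets.compl_sets sets.finite_UN sets_coupon_stream_avoid) auto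
  finally show ?thesis .
qed

lemma borel_measurable_completion_time [measurable]:
  assumes "finite M"
  shows "completion_time M \<in> borel_measurable (coupon_stream n)"
proof (rule borel_measurableI_less)
  fix y :: enat
  have less_iff: "x < y \<longleftrightarrow> (\<exists>t. enat t < y \<and> x \<le> enat t)" for x :: enat
    by (cases x) (auto intro: le_less_trans[of _ "enat _"])
  have "{w. completion_time M w < y} = (\<Union>t\<in>{t. enat t < y}. {w. M \<subseteq> set (stake t w)})"
    using less_iff unfolding completion_time_le_iff[symmetric] by blast
  also have "\<dots> \<in> sets (coupon_stream n)"
    using assms by (intro sets.countable_UN'' sets_coupon_stream_seen) auto
  finally show "{w \<in> space (coupon_stream n). completion_time M w < y} \<in> sets (coupon_stream n)"
    by simp
qed

lemma sets_coupon_stream_completion_time: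
  assumes "finite M"
  shows "{w. P (completion_time M w)} \<in> sets (coupon_stream n)"
proof -
  have "{w. P (completion_time M w)} =
      (\<Union>c\<in>{c. P c}. {w \<in> space (coupon_stream n). completion_time M w = c})"
    by auto
  also have "\<dots> \<in> sets (coupon_stream n)"
    by (intro sets.countable_UN'' countableI_type) (use assms in measurable)
  finally show ?thesis .
qed

definition completion_cdf :: "nat \<Rightarrow> nat set \<Rightarrow> nat \<Rightarrow> real" where
  "completion_cdf n M t = measure (coupon_stream n) {w. completion_time M w \<le> enat t}"

lemma completion_cdf_bounds: "0 \<le> completion_cdf n M t" "completion_cdf n M t \<le> 1"
proof -
  interpret prob_space "coupon_stream n" by (rule prob_space_coupon_stream)
  show "0 \<le> completion_cdf n M t" "completion_cdf n M t \<le> 1"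
    unfolding completion_cdf_def by simp_all
qed

lemma completion_cdf_0: "M \<noteq> {} \<Longrightarrow> completion_cdf n M 0 = 0"
  unfolding completion_cdf_def completion_time_le_iff by simp

lemma measure_completion_time_eq_Suc:
  assumes "finite M"
  shows "measure (coupon_stream n) {w. completion_time M w = enat (Suc t)} =
           completion_cdf n M (Suc t) - completion_cdf n M t"
proof -
  interpret prob_space "coupon_stream n" by (rule prob_space_coupon_stream)
  have "x = enat (Suc t) \<longleftrightarrow> x \<le> enat (Suc t) \<and> \<not> x \<le> enat t" for x :: enat
    by (cases x) auto
  then have "{w. completion_time M w = enat (Suc t)} =
      {w. completion_time M w \<le> enat (Suc t)} - {w. completion_time M w \<le> enat t}"
    by blast
  also have "measure (coupon_stream n) \<dots> = completion_cdf n M (Suc t) - completion_cdf n M t"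
    unfolding completion_cdf_def using assms
    by (intro finite_measure_Diff sets_coupon_stream_completion_time) (auto elim: order_trans)
  finally show ?thesis .
qed

lemma measure_completion_time_greater:
  assumes "finite M"
  shows "measure (coupon_stream n) {w. enat t < completion_time M w} = 1 - completion_cdf n M t"
proof -
  interpret prob_space "coupon_stream n" by (rule prob_space_coupon_stream)
  have "{w. enat t < completion_time M w} = space (coupon_stream n) - {w. completion_time M w \<le> enat t}"
    by auto
  then show ?thesis
    unfolding completion_cdf_def using assms
    by (simp only:) (intro prob_compl sets_coupon_stream_completion_time)
qed

lemma completion_cdf_mono:
  assumes "finite M"
  shows "completion_cdf n M t \<le> completion_cdf n M (Suc t)"
  using measure_completion_time_eq_Suc[OF assms, of n t]
    measure_nonneg[of "coupon_stream n" "{w. completion_time M w = enat (Suc t)}"]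
  by linarith

lemma completion_cdf_inclusion_exclusion:
  assumes n: "n \<ge> 1" and M: "M \<subseteq> {1..n}"
  shows "completion_cdf n M t = (\<Sum>B\<in>Pow M. (-1) ^ card B * (1 - real (card B) / real n) ^ t)"
proof -
  interpret S: prob_space "coupon_stream n" by (rule prob_space_coupon_stream)
  interpret IE: Incl_Excl "\<lambda>X. X \<in> sets (coupon_stream n)" "measure (coupon_stream n)"
    by standard (auto simp: disjnt_def S.finite_measure_Union)
  have fin: "finite M" using M finite_subset by blast
  let ?missed = "\<lambda>c. {w. \<forall>i<t. w !! i \<notin> {c}}"
  have missed_Inter: "\<Inter> (?missed ` B) = {w. \<forall>i<t. w !! i \<notin> B}" if "B \<noteq> {}" for B
    using that by auto
  have done_eq: "{w. completion_time M w \<le> enat t} = space (coupon_stream n) - \<Union>(?missed ` M)"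
    by (auto simp: completion_time_le_iff subset_iff in_set_stake_iff)
  have "\<Union>(?missed ` M) \<in> sets (coupon_stream n)"
    using fin by (intro sets.finite_UN sets_coupon_stream_avoid) auto
  then have "completion_cdf n M t = 1 - measure (coupon_stream n) (\<Union>(?missed ` M))"
    unfolding completion_cdf_def done_eq by (rule S.prob_compl)
  also have "measure (coupon_stream n) (\<Union>(?missed ` M)) =
      (\<Sum>B | B \<subseteq> M \<and> B \<noteq> {}. (- 1) ^ (card B + 1) * measure (coupon_stream n) (\<Inter> (?missed ` B)))"
    by (rule IE.restricted_indexed) (use fin sets_coupon_stream_avoid in blast)+
  also have "\<dots> = (\<Sum>B | B \<subseteq> M \<and> B \<noteq> {}. (- 1) ^ (card B + 1) * (1 - real (card B) / real n) ^ t)"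
  proof (intro sum.cong refl)
    fix B assume "B \<in> {B. B \<subseteq> M \<and> B \<noteq> {}}"
    then have "B \<subseteq> {1..n}" "B \<noteq> {}" using M by auto
    then show "(- 1) ^ (card B + 1) * measure (coupon_stream n) (\<Inter> (?missed ` B)) =
        (- 1) ^ (card B + 1) * (1 - real (card B) / real n) ^ t"
      by (subst missed_Inter) (simp_all add: measure_coupon_stream_avoid[OF n])
  qed
  also have "1 - \<dots> = (\<Sum>B\<in>Pow M. (-1) ^ card B * (1 - real (card B) / real n) ^ t)"
  proof -
    have "{B. B \<subseteq> M \<and> B \<noteq> {}} = Pow M - {{}}" by auto
    moreover have "(\<Sum>B\<in>Pow M. (-1) ^ card B * (1 - real (card B) / real n) ^ t) =
        1 + (\<Sum>B\<in>Pow M - {{}}. (-1) ^ card B * (1 - real (card B) / real n) ^ t)"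
      using fin by (subst sum.remove[of _ "{}"]) auto
    ultimately show ?thesis by (simp add: sum_negf)
  qed
  finally show ?thesis .
qed

definition coupon_seen_prob :: "nat \<Rightarrow> nat \<Rightarrow> real" where
  "coupon_seen_prob n t = 1 - (1 - 1 / real n) ^ t"

lemma completion_cdf_approx:
  assumes n: "n \<ge> 1" and M: "M \<subseteq> {1..n}"
  shows "\<bar>completion_cdf n M t - coupon_seen_prob n t ^ card M\<bar> \<le> 2 ^ card M * (real (card M))^2 / real n"
proof -
  have fin: "finite M" using M finite_subset by blast
  have "coupon_seen_prob n t ^ card M = (\<Prod>c\<in>M. 1 - ((1 - 1 / real n) ^ t) ^ (1::nat))"
    by (simp add: coupon_seen_prob_def)
  also have "\<dots> = (\<Sum>B\<in>Pow M. (-1) ^ card B * ((1 - 1 / real n) ^ t) ^ (\<Sum>c\<in>B. 1))"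
    by (rule prod_one_minus_power_expand[OF fin])
  also have "\<dots> = (\<Sum>B\<in>Pow M. (-1) ^ card B * ((1 - 1 / real n) ^ card B) ^ t)"
    by (simp add: power_mult[symmetric] mult.commute)
  finally have "\<bar>completion_cdf n M t - coupon_seen_prob n t ^ card M\<bar> =
      \<bar>\<Sum>B\<in>Pow M. (-1) ^ card B * ((1 - real (card B) / real n) ^ t - ((1 - 1 / real n) ^ card B) ^ t)\<bar>"
    unfolding completion_cdf_inclusion_exclusion[OF n M] by (simp add: sum_subtractf algebra_simps)
  also have "\<dots> \<le> (\<Sum>B\<in>Pow M. \<bar>(1 - real (card B) / real n) ^ t - ((1 - 1 / real n) ^ card B) ^ t\<bar>)"
    by (rule order_trans[OF sum_abs]) (simp add: abs_mult)
  also have "\<dots> \<le> (\<Sum>B\<in>Pow M. (real (card M))^2 / real n)"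
  proof (rule sum_mono)
    fix B assume "B \<in> Pow M"
    then have B: "card B \<le> card M" using fin by (auto intro: card_mono)
    moreover have "card M \<le> n" using card_mono[OF _ M] by simp
    ultimately have "\<bar>(1 - real (card B) / real n) ^ t - ((1 - 1 / real n) ^ card B) ^ t\<bar>
        \<le> (real (card B))^2 / real n"
      using n by (intro power_one_minus_mult_approx) auto
    also have "\<dots> \<le> (real (card M))^2 / real n"
      using B by (intro divide_right_mono power_mono) auto
    finally show "\<bar>(1 - real (card B) / real n) ^ t - ((1 - 1 / real n) ^ card B) ^ t\<bar>
        \<le> (real (card M))^2 / real n" .
  qed
  also have "\<dots> = 2 ^ card M * (real (card M))^2 / real n"
    using fin by (simp add: card_Pow)
  finally show ?thesis .
qed

lemma unit_grid_coupon_seen_prob: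
  assumes "n \<ge> 1"
  shows "unit_grid (coupon_seen_prob n) (1 / real n)"
proof
  have q: "0 \<le> 1 - 1 / real n" "1 - 1 / real n \<le> 1" using assms by auto
  fix t
  show "coupon_seen_prob n 0 = 0" by (simp add: coupon_seen_prob_def)
  show "coupon_seen_prob n t \<le> coupon_seen_prob n (Suc t)"
    using q by (simp add: coupon_seen_prob_def mult_left_le_one_le)
  show "coupon_seen_prob n t \<le> 1"
    using q by (simp add: coupon_seen_prob_def)
  have "coupon_seen_prob n (Suc t) - coupon_seen_prob n t = (1 - 1 / real n) ^ t * (1 / real n)"
    by (simp add: coupon_seen_prob_def algebra_simps)
  also have "\<dots> \<le> 1 * (1 / real n)"
    using q by (intro mult_right_mono power_le_one) auto
  finally show "coupon_seen_prob n (Suc t) - coupon_seen_prob n t \<le> 1 / real n" by simp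
qed

lemma coupon_seen_prob_tendsto_1:
  assumes "n \<ge> 1"
  shows "coupon_seen_prob n \<longlonglongrightarrow> 1"
proof -
  have "(\<lambda>t. (1 - 1 / real n) ^ t) \<longlonglongrightarrow> 0"
    using assms by (intro LIMSEQ_power_zero) auto
  then show ?thesis
    unfolding coupon_seen_prob_def using tendsto_diff[OF tendsto_const] by fastforce
qed

section \<open>The race\<close>

lemma coupon_space_eq: "coupon_space n k = PiM {1..k} (\<lambda>_. coupon_stream n)"
  by (simp add: coupon_space_def coupon_stream_def)

lemma finite_product_prob_space_coupon_stream:
  fixes k :: nat
  shows "finite_product_prob_space (\<lambda>_. coupon_stream n) {1..k}"
  unfolding finite_product_prob_space_def finite_product_sigma_finite_def
    finite_product_sigma_finite_axioms_def product_prob_space_def product_sigma_finite_def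
    product_prob_space_axioms_def
  by (auto simp: prob_space_coupon_stream prob_space_imp_sigma_finite)

lemma prob_space_coupon_space: "prob_space (coupon_space n k)"
  unfolding coupon_space_eq by (intro prob_space_PiM prob_space_coupon_stream)

lemma measure_coupon_space_component:
  assumes i: "i \<in> {1..k}" and A: "A \<in> sets (coupon_stream n)"
  shows "measure (coupon_space n k) {\<omega> \<in> space (coupon_space n k). \<omega> i \<in> A} = measure (coupon_stream n) A"
proof -
  have "measure (coupon_space n k) {\<omega> \<in> space (coupon_space n k). \<omega> i \<in> A} =
      measure (distr (coupon_space n k) (coupon_stream n) (\<lambda>\<omega>. \<omega> i)) A"
    unfolding coupon_space_eq using i A
    by (subst measure_distr) (auto intro: measurable_component_singleton simp: vimage_def Int_def conj_commute)
  also have "distr (coupon_space n k) (coupon_stream n) (\<lambda>\<omega>. \<omega> i) = coupon_stream n"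
    unfolding coupon_space_eq using i by (intro distr_PiM_component prob_space_coupon_stream)
  finally show ?thesis .
qed

context
  fixes n k :: nat and M :: "nat \<Rightarrow> nat set"
  assumes n: "n \<ge> 1" and k: "k \<ge> 1"
    and M_sub: "\<And>i. i \<in> {1..k} \<Longrightarrow> M i \<subseteq> {1..n}"
    and M_ne: "\<And>i. i \<in> {1..k} \<Longrightarrow> M i \<noteq> {}"
begin

lemma one_mem: "1 \<in> {1..k}"
  using k by simp

lemma finite_M: "i \<in> {1..k} \<Longrightarrow> finite (M i)"
  using M_sub finite_subset by blast

definition first_fastest :: "(nat \<Rightarrow> nat stream) set" where
  "first_fastest = {\<omega> \<in> space (coupon_space n k).
     \<forall>i\<in>{1..k}. completion_time (M 1) (\<omega> 1) \<le> completion_time (M i) (\<omega> i)}"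

definition first_done_at :: "nat \<Rightarrow> (nat \<Rightarrow> nat stream) set" where
  "first_done_at t = {\<omega> \<in> space (coupon_space n k).
     completion_time (M 1) (\<omega> 1) = enat (Suc t) \<and> (\<forall>i\<in>{2..k}. enat t < completion_time (M i) (\<omega> i))}"

lemma Q1_eq_first_fastest: "Q1 n k M = measure (coupon_space n k) first_fastest"
  by (simp add: Q1_def first_fastest_def)

lemma borel_measurable_completion_time_component:
  assumes i: "i \<in> {1..k}"
  shows "(\<lambda>\<omega>. completion_time (M i) (\<omega> i)) \<in> borel_measurable (coupon_space n k)"
  unfolding coupon_space_eq
  using measurable_compose[OF measurable_component_singleton[OF i] borel_measurable_completion_time[OF finite_M[OF i]]] .

lemma sets_first_fastest: "first_fastest \<in> sets (coupon_space n k)"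
  unfolding first_fastest_def
  by (intro sets.sets_Collect_finite_All borel_measurable_le borel_measurable_completion_time_component one_mem)
     auto

lemma sets_first_done_at: "first_done_at t \<in> sets (coupon_space n k)"
  unfolding first_done_at_def
  by (intro sets.sets_Collect_conj sets.sets_Collect_finite_All borel_measurable_eq borel_measurable_less
      borel_measurable_completion_time_component one_mem borel_measurable_const) auto

lemma measure_first_done_at:
  "measure (coupon_space n k) (first_done_at t) =
     (completion_cdf n (M 1) (Suc t) - completion_cdf n (M 1) t) * (\<Prod>i\<in>{2..k}. 1 - completion_cdf n (M i) t)"
proof -
  interpret P: finite_product_prob_space "\<lambda>_. coupon_stream n" "{1..k}"
    by (rule finite_product_prob_space_coupon_stream)
  define A where "A i = (if i = 1 then {w. completion_time (M 1) w = enat (Suc t)}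
                         else {w. enat t < completion_time (M i) w})" for i
  have split: "{1..k} = insert 1 {2..k}" using k by auto
  have "first_done_at t = PiE {1..k} A"
    unfolding first_done_at_def coupon_space_eq A_def using k
    by (auto simp: space_PiM PiE_iff extensional_def split: if_splits)
  also have "measure (coupon_space n k) \<dots> = (\<Prod>i\<in>{1..k}. measure (coupon_stream n) (A i))"
    unfolding coupon_space_eq
    by (rule P.prob_times) (auto simp: A_def finite_M intro: sets_coupon_stream_completion_time)
  also have "\<dots> = measure (coupon_stream n) (A 1) * (\<Prod>i\<in>{2..k}. measure (coupon_stream n) (A i))"
    unfolding split by simp
  also have "measure (coupon_stream n) (A 1) = completion_cdf n (M 1) (Suc t) - completion_cdf n (M 1) t"
    unfolding A_def if_P[OF refl] by (rule measure_completion_time_eq_Suc[OF finite_M[OF one_mem]])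
  also have "(\<Prod>i\<in>{2..k}. measure (coupon_stream n) (A i)) = (\<Prod>i\<in>{2..k}. 1 - completion_cdf n (M i) t)"
    by (intro prod.cong refl) (simp add: A_def measure_completion_time_greater finite_M)
  finally show ?thesis .
qed

lemma first_done_at_subset: "first_done_at t \<subseteq> first_fastest"
proof
  fix \<omega> assume \<omega>: "\<omega> \<in> first_done_at t"
  have "completion_time (M 1) (\<omega> 1) \<le> completion_time (M i) (\<omega> i)" if i: "i \<in> {1..k}" for i
  proof (cases "i = 1")
    case False
    then have "enat t < completion_time (M i) (\<omega> i)" using \<omega> i by (simp add: first_done_at_def)
    then show ?thesis using \<omega> by (simp add: first_done_at_def Suc_ile_eq)
  qed simp
  then show "\<omega> \<in> first_fastest" using \<omega> by (simp add: first_done_at_def first_fastest_def)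
qed

lemma first_fastest_subset:
  "first_fastest \<subseteq>
     (\<Union>t<N. first_done_at t) \<union> {\<omega> \<in> space (coupon_space n k). enat N < completion_time (M 1) (\<omega> 1)}"
proof
  fix \<omega> assume "\<omega> \<in> first_fastest"
  then have \<omega>: "\<omega> \<in> space (coupon_space n k)"
    and fastest: "\<forall>i\<in>{1..k}. completion_time (M 1) (\<omega> 1) \<le> completion_time (M i) (\<omega> i)"
    by (auto simp: first_fastest_def)
  show "\<omega> \<in>
     (\<Union>t<N. first_done_at t) \<union> {\<omega> \<in> space (coupon_space n k). enat N < completion_time (M 1) (\<omega> 1)}"
  proof (cases "enat N < completion_time (M 1) (\<omega> 1)")
    case True
    then show ?thesis using \<omega> by (intro UnI2 CollectI conjI)
  next
    case False
    then obtain m where m: "completion_time (M 1) (\<omega> 1) = enat m" "m \<le> N"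
      by (cases "completion_time (M 1) (\<omega> 1)") auto
    have "m \<noteq> 0"
      using m M_ne[OF one_mem] completion_time_le_iff[of "M 1" "\<omega> 1" 0] by auto
    then obtain t where t: "m = Suc t" by (cases m) auto
    have "\<omega> \<in> first_done_at t"
      unfolding first_done_at_def using \<omega> fastest m t by (auto simp: Suc_ile_eq)
    then show ?thesis using m t by auto
  qed
qed

lemma sum_first_done_at_le_Q1: "(\<Sum>t<N. measure (coupon_space n k) (first_done_at t)) \<le> Q1 n k M"
proof -
  interpret prob_space "coupon_space n k" by (rule prob_space_coupon_space)
  have "disjoint_family first_done_at"
    by (auto simp: disjoint_family_on_def first_done_at_def)
  then have "(\<Sum>t<N. measure (coupon_space n k) (first_done_at t)) =
      measure (coupon_space n k) (\<Union>t<N. first_done_at t)"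
    by (intro finite_measure_finite_Union[symmetric] disjoint_family_on_mono[OF subset_UNIV, of _ "{..<N}"])
       (auto intro: sets_first_done_at)
  also have "\<dots> \<le> Q1 n k M"
    unfolding Q1_eq_first_fastest
    by (intro finite_measure_mono UN_least first_done_at_subset sets_first_fastest)
  finally show ?thesis .
qed

lemma Q1_le_sum_first_done_at:
  "Q1 n k M \<le> (\<Sum>t<N. measure (coupon_space n k) (first_done_at t)) + (1 - completion_cdf n (M 1) N)"
proof -
  interpret prob_space "coupon_space n k" by (rule prob_space_coupon_space)
  define A where "A = {w. enat N < completion_time (M 1) w}"
  let ?late = "{\<omega> \<in> space (coupon_space n k). \<omega> 1 \<in> A}"
  have A: "A \<in> sets (coupon_stream n)"
    unfolding A_def by (rule sets_coupon_stream_completion_time[OF finite_M[OF one_mem]])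
  have late: "?late \<in> sets (coupon_space n k)"
    unfolding coupon_space_eq using A one_mem by (intro sets_Collect_single') auto
  have "Q1 n k M \<le> measure (coupon_space n k) ((\<Union>t<N. first_done_at t) \<union> ?late)"
    unfolding Q1_eq_first_fastest using first_fastest_subset[of N] late sets_first_done_at
    by (intro finite_measure_mono) (auto simp: A_def)
  also have "\<dots> \<le> measure (coupon_space n k) (\<Union>t<N. first_done_at t) + measure (coupon_space n k) ?late"
    using late sets_first_done_at by (intro measure_Un_le) auto
  also have "measure (coupon_space n k) (\<Union>t<N. first_done_at t) \<le>
      (\<Sum>t<N. measure (coupon_space n k) (first_done_at t))"
    using sets_first_done_at by (intro finite_measure_subadditive_finite) auto
  also have "measure (coupon_space n k) ?late = 1 - completion_cdf n (M 1) N"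
    using measure_coupon_space_component[OF one_mem A] measure_completion_time_greater[OF finite_M[OF one_mem]]
    by (simp add: A_def)
  finally show ?thesis by simp
qed

lemma Q1_approx_horizon:
  fixes s :: "nat \<Rightarrow> nat"
  assumes card_M: "\<And>i. i \<in> {1..k} \<Longrightarrow> card (M i) = s i"
    and approx: "\<And>i t. i \<in> {1..k} \<Longrightarrow> \<bar>completion_cdf n (M i) t - coupon_seen_prob n t ^ s i\<bar> \<le> \<epsilon>"
  shows "\<bar>Q1 n k M - (\<Sum>S\<in>Pow {2..k}. (-1) ^ card S * real (s 1) / real (s 1 + (\<Sum>i\<in>S. s i)))\<bar>
           \<le> real (k - 1) * \<epsilon>
               + 2 ^ (k - 1) * (2 * \<epsilon> + real (s 1) / real n + (1 - coupon_seen_prob n N ^ (s 1 + (\<Sum>i\<in>{2..k}. s i))))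
             + \<epsilon> + (1 - coupon_seen_prob n N ^ s 1)"
proof -
  interpret grid: unit_grid "coupon_seen_prob n" "1 / real n"
    by (rule unit_grid_coupon_seen_prob[OF n])
  let ?F = "\<lambda>i. completion_cdf n (M i)"
  let ?sum = "\<Sum>t<N. (?F 1 (Suc t) - ?F 1 t) * (\<Prod>i\<in>{2..k}. 1 - ?F i t)"
  have "s 1 \<ge> 1"
    using card_M[OF one_mem] M_ne[OF one_mem] finite_M[OF one_mem] by (metis card_0_eq less_one not_le)
  moreover have "card {2..k} = k - 1" by simp
  ultimately have "\<bar>?sum - (\<Sum>S\<in>Pow {2..k}. (-1) ^ card S * real (s 1) / real (s 1 + (\<Sum>i\<in>S. s i)))\<bar>
      \<le> real (k - 1) * \<epsilon>
         + 2 ^ (k - 1) * (2 * \<epsilon> + real (s 1) * (1 / real n) + (1 - coupon_seen_prob n N ^ (s 1 + (\<Sum>i\<in>{2..k}. s i))))"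
    using grid.stieltjes_sum_prod_approx[of "{2..k}" "s 1" "?F 1" \<epsilon> "\<lambda>i. ?F i" s N]
      approx completion_cdf_bounds completion_cdf_mono[OF finite_M[OF one_mem]] completion_cdf_0 M_ne one_mem
    by auto
  moreover have "?sum \<le> Q1 n k M" "Q1 n k M \<le> ?sum + (1 - ?F 1 N)"
    using sum_first_done_at_le_Q1[of N] Q1_le_sum_first_done_at[of N] by (simp_all add: measure_first_done_at)
  moreover have "1 - ?F 1 N \<le> \<epsilon> + (1 - coupon_seen_prob n N ^ s 1)"
    using approx[OF one_mem, of N] by linarith
  moreover have "0 \<le> \<epsilon>" using approx[OF one_mem, of 0] by linarith
  ultimately show ?thesis unfolding abs_le_iff by simp
qed

lemma Q1_approx:
  fixes s :: "nat \<Rightarrow> nat"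
  assumes card_M: "\<And>i. i \<in> {1..k} \<Longrightarrow> card (M i) = s i"
  shows "\<bar>Q1 n k M - (\<Sum>S\<in>Pow {2..k}. (-1) ^ card S * real (s 1) / real (s 1 + (\<Sum>i\<in>S. s i)))\<bar>
           \<le> ((real k + 2 ^ k) * (\<Sum>i\<in>{1..k}. 2 ^ s i * (real (s i))^2) + 2 ^ (k - 1) * real (s 1)) / real n"
proof -
  define E where "E = (\<Sum>i\<in>{1..k}. 2 ^ s i * (real (s i))^2)"
  define \<epsilon> where "\<epsilon> = E / real n"
  define m where "m = s 1 + (\<Sum>i\<in>{2..k}. s i)"
  have approx: "\<bar>completion_cdf n (M i) t - coupon_seen_prob n t ^ s i\<bar> \<le> \<epsilon>" if i: "i \<in> {1..k}" for i t
  proof -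
    have "\<bar>completion_cdf n (M i) t - coupon_seen_prob n t ^ s i\<bar> \<le> 2 ^ s i * (real (s i))^2 / real n"
      using completion_cdf_approx[OF n M_sub[OF i], of t] card_M[OF i] by simp
    also have "\<dots> \<le> \<epsilon>"
      unfolding \<epsilon>_def E_def using i by (intro divide_right_mono member_le_sum) auto
    finally show ?thesis .
  qed
  (* The bound of Q1_approx_horizon holds for every horizon N, and its tail terms vanish as N grows. *)
  have "(\<lambda>N. real (k - 1) * \<epsilon> + 2 ^ (k - 1) * (2 * \<epsilon> + real (s 1) / real n + (1 - coupon_seen_prob n N ^ m))
             + \<epsilon> + (1 - coupon_seen_prob n N ^ s 1))
      \<longlonglongrightarrow> real (k - 1) * \<epsilon> + 2 ^ (k - 1) * (2 * \<epsilon> + real (s 1) / real n + (1 - 1 ^ m)) + \<epsilon> + (1 - 1 ^ s 1)"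
    by (intro tendsto_intros coupon_seen_prob_tendsto_1[OF n])
  then have "\<bar>Q1 n k M - (\<Sum>S\<in>Pow {2..k}. (-1) ^ card S * real (s 1) / real (s 1 + (\<Sum>i\<in>S. s i)))\<bar>
      \<le> real (k - 1) * \<epsilon> + 2 ^ (k - 1) * (2 * \<epsilon> + real (s 1) / real n) + \<epsilon>"
    using Q1_approx_horizon[OF card_M approx] unfolding m_def
    by (intro tendsto_lowerbound[OF _ always_eventually]) auto
  also have "\<dots> = ((real k + 2 ^ k) * E + 2 ^ (k - 1) * real (s 1)) / real n"
  proof -
    have "(2::real) ^ k = 2 * 2 ^ (k - 1)" using k by (simp add: power_eq_if)
    then show ?thesis using n k by (simp add: \<epsilon>_def field_simps of_nat_diff)
  qed
  finally show ?thesis unfolding E_def .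
qed

end

theorem mainTheorem5:
  fixes k :: nat and s :: "nat \<Rightarrow> nat" and M :: "nat \<Rightarrow> nat \<Rightarrow> nat set"
  assumes "k \<ge> 1"
    and "\<forall>i\<in>{1..k}. s i > 0"
    and "eventually (\<lambda>n. \<forall>i\<in>{1..k}. M n i \<subseteq> {1..n} \<and> card (M n i) = s i) sequentially"
  shows "(\<lambda>n. Q1 n k (M n)) \<longlonglongrightarrow>
           (\<Sum>S\<in>Pow {2..k}. (-1) ^ card S * real (s 1) / real (s 1 + (\<Sum>i\<in>S. s i)))"
proof -
  define L where "L = (\<Sum>S\<in>Pow {2..k}. (-1) ^ card S * real (s 1) / real (s 1 + (\<Sum>i\<in>S. s i)))"
  define C where "C = (real k + 2 ^ k) * (\<Sum>i\<in>{1..k}. 2 ^ s i * (real (s i))^2) + 2 ^ (k - 1) * real (s 1)"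
  have "eventually (\<lambda>n. norm (Q1 n k (M n) - L) \<le> C / real n) sequentially"
    using eventually_conj[OF assms(3) eventually_ge_at_top[of 1]]
  proof eventually_elim
    case (elim n)
    then have "M n i \<noteq> {}" if "i \<in> {1..k}" for i
      using assms(2) that by fastforce
    then show ?case
      unfolding L_def C_def real_norm_def using elim assms(1) by (intro Q1_approx) auto
  qed
  with lim_const_over_n[of C] have "(\<lambda>n. Q1 n k (M n) - L) \<longlonglongrightarrow> 0"
    by (rule Lim_null_comparison[rotated])
  then show ?thesis unfolding L_def[symmetric] by (rule LIM_zero_cancel)
qed

end
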